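(* In the setting below, let $\Omega$ have the inner $\epsilon$-ball property for some $\epsilon>0$, let $0<m\le f_\mu\le M<\infty$ on $\Omega$, let $p>n$, $p\ge4$ with $M_p:=\int|x|^pd\nu<\infty$, and let $q$ satisfy $\frac1p+\frac1q=1$. Assume that $\phi_\mu$ and all $\phi_{\mu;R}$ are Hölder continuous on $\Omega$ with exponent $1-\frac np$ and a common constant $C_H$ (as holds under these assumptions by a result of Berman–Berndtsson), and that $\|\phi_{\mu;R}-\phi_\mu\|_{L^1(\Omega)}\le h(R)$ with $h(R)\to0$ as $R\to\infty$. Then there exist $R_0>0$ and $C=C(n,p,\Omega,m,M,C_H)$ such that for all $R\ge R_0$, $$\max_{x\in\Omega}|\phi_{\mu;R}(x)-\phi_\mu(x)|\le C\,h(R)^{\frac{1-n/p}{1+n/q}}.$$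
   Context: Setting: $\Omega\subset\mathbb{R}^n$ compact convex with nonempty interior; $\mu$ a probability measure with density $f_\mu$, $\mathrm{spt}(\mu)=\Omega$; $\nu$ a probability measure on $\mathbb{R}^n$ with a density and finite second moment; $\nu_R(E):=\nu(E\cap B_R(0))/\nu(B_R(0))$. Cost $\frac12|x-y|^2$. $\phi_\mu$ ($\phi_{\mu;R}$) is the Brenier potential for $\mu\to\nu$ ($\mu\to\nu_R$): convex, whose gradient is the optimal transport map $\mu$-a.e.; constants fixed by $\int_\Omega\phi_\mu\,dx=\int_\Omega\phi_{\mu;R}\,dx=0$. A closed set $A$ has the inner $\epsilon$-ball property if there is a set $A'$ with $A=\bigcup_{x\in A'}\overline{B_\epsilon(x)}$. *)

theory Defs
  imports "HOL-Probability.Probability"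
begin

definition measure_support :: "'a::metric_space measure \<Rightarrow> 'a set" where
  "measure_support \<mu> = {x. \<forall>e>0. emeasure \<mu> (ball x e) > 0}"

definition trunc_measure :: "'a::real_normed_vector measure \<Rightarrow> real \<Rightarrow> 'a measure" where
  "trunc_measure \<nu> R =
     scale_measure (ennreal (1 / measure \<nu> (ball 0 R))) (density \<nu> (indicator (ball 0 R)))"

definition pushes_forward :: "'a::euclidean_space measure \<Rightarrow> 'a measure \<Rightarrow> ('a \<Rightarrow> 'a) \<Rightarrow> bool" where
  "pushes_forward \<mu> \<nu> T \<longleftrightarrow> T \<in> borel_measurable \<mu> \<and> distr \<mu> borel T = \<nu>"

definition transport_cost :: "'a::euclidean_space measure \<Rightarrow> ('a \<Rightarrow> 'a) \<Rightarrow> ennreal" where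
  "transport_cost \<mu> T = (\<integral>\<^sup>+ x. ennreal ((norm (x - T x))\<^sup>2 / 2) \<partial>\<mu>)"

definition optimal_map :: "'a::euclidean_space measure \<Rightarrow> 'a measure \<Rightarrow> ('a \<Rightarrow> 'a) \<Rightarrow> bool" where
  "optimal_map \<mu> \<nu> T \<longleftrightarrow> pushes_forward \<mu> \<nu> T \<and>
     (\<forall>S. pushes_forward \<mu> \<nu> S \<longrightarrow> transport_cost \<mu> T \<le> transport_cost \<mu> S)"

definition brenier_potential ::
  "'a::euclidean_space set \<Rightarrow> 'a measure \<Rightarrow> 'a measure \<Rightarrow> ('a \<Rightarrow> real) \<Rightarrow> bool" where
  "brenier_potential \<Omega> \<mu> \<nu> \<phi> \<longleftrightarrow> convex_on \<Omega> \<phi> \<and>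
     (\<exists>T. optimal_map \<mu> \<nu> T \<and>
          (AE x in \<mu>. (\<phi> has_derivative (\<lambda>v. T x \<bullet> v)) (at x within \<Omega>))) \<and>
     (\<phi> has_integral 0) \<Omega>"

definition inner_ball_property :: "'a::metric_space set \<Rightarrow> real \<Rightarrow> bool" where
  "inner_ball_property A \<epsilon> \<longleftrightarrow> closed A \<and> (\<exists>A'. A = (\<Union>x\<in>A'. cball x \<epsilon>))"

end

theory Submission
  imports Defs
begin

text \<open>The difference g = \<phi>R R - \<phi> is Hoelder continuous with exponent \<alpha> = 1 - n/p and
  constant 2 max(C_H, 1). If |g x| = \<delta>, then |g| \<ge> \<delta>/2 on \<Omega> \<inter> B(x, r) for r of order \<delta>^(1/\<alpha>),
  and since \<Omega> is a convex body this set has volume at least \<kappa> r^n for small r. So the L1 norm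
  of g, which is at most h R, is at least of order \<delta>^(1 + n/\<alpha>), giving
  \<delta> \<le> C (h R)^(\<alpha>/(\<alpha>+n)); and \<alpha>/(\<alpha>+n) = (1 - n/p)/(1 + n/q) because 1/p + 1/q = 1.\<close>

lemma continuous_on_compact_imp_integrable_on:
  fixes f :: "'a::euclidean_space \<Rightarrow> real"
  assumes "compact S" "continuous_on S f"
  shows "f integrable_on S"
proof -
  have "integrable lborel (\<lambda>x. indicator S x *\<^sub>R f x)"
    by (rule borel_integrable_compact[OF assms])
  then show ?thesis
    by (simp add: set_integrable_def set_borel_integral_eq_integral(1))
qed

lemma holder_imp_continuous_on:
  fixes g :: "'a::metric_space \<Rightarrow> real"
  assumes "\<alpha> > 0" "L > 0" and holder: "\<forall>x\<in>S. \<forall>y\<in>S. \<bar>g x - g y\<bar> \<le> L * dist x y powr \<alpha>"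
  shows "continuous_on S g"
  unfolding continuous_on_iff
proof (intro ballI allI impI)
  fix x e assume x: "x \<in> S" and "(0::real) < e"
  define d where "d = (e / (2 * L)) powr (1 / \<alpha>)"
  have "d > 0" and d: "d powr \<alpha> = e / (2 * L)"
    using \<open>0 < e\<close> assms(1,2) by (simp_all add: d_def powr_powr)
  show "\<exists>d>0. \<forall>y\<in>S. dist y x < d \<longrightarrow> dist (g y) (g x) < e"
  proof (intro exI[of _ d] conjI ballI impI \<open>d > 0\<close>)
    fix y assume "y \<in> S" "dist y x < d"
    then have "\<bar>g y - g x\<bar> \<le> L * dist y x powr \<alpha>" using holder x by blast
    also have "\<dots> \<le> L * d powr \<alpha>"
      using \<open>dist y x < d\<close> assms(1,2) by (intro mult_left_mono powr_mono2) auto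
    also have "\<dots> < e" using d \<open>0 < e\<close> assms(2) by simp
    finally show "dist (g y) (g x) < e" by (simp add: dist_real_def)
  qed
qed

text \<open>Shrinking \<Omega> towards x by the factor r/(D + s) maps an inner ball B(a, s) of \<Omega>
  into \<Omega> \<inter> cball x r, where D bounds the distance from a to \<Omega>.\<close>
lemma convex_body_measure_Int_cball_ge:
  fixes \<Omega> :: "'a::euclidean_space set"
  assumes "compact \<Omega>" "convex \<Omega>" "interior \<Omega> \<noteq> {}"
  obtains \<kappa> \<rho> where "\<kappa> > 0" "\<rho> > 0"
    "\<And>x r. x \<in> \<Omega> \<Longrightarrow> 0 < r \<Longrightarrow> r \<le> \<rho> \<Longrightarrow> \<kappa> * r ^ DIM('a) \<le> measure lebesgue (\<Omega> \<inter> cball x r)"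
proof -
  obtain a s where s: "s > 0" "ball a s \<subseteq> \<Omega>"
    using assms(3) by (metis all_not_in_conv mem_interior)
  obtain D where D: "\<And>x. x \<in> \<Omega> \<Longrightarrow> dist a x \<le> D"
    using compact_imp_bounded[OF assms(1)] by (meson bounded_any_center)
  have "D \<ge> 0" using D[of a] s(1,2) centre_in_ball by (metis dist_self subset_iff)
  define \<kappa> where "\<kappa> = (s / (D + s)) ^ DIM('a) * Henstock_Kurzweil_Integration.content (ball (0::'a) 1)"
  have "\<kappa> > 0" unfolding \<kappa>_def using s \<open>D \<ge> 0\<close> by (simp add: content_ball_pos)
  moreover have "\<kappa> * r ^ DIM('a) \<le> measure lebesgue (\<Omega> \<inter> cball x r)"
    if x: "x \<in> \<Omega>" and r: "0 < r" "r \<le> D + s" for x r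
  proof -
    define t where "t = r / (D + s)"
    have t: "0 < t" "t \<le> 1" using r s \<open>D \<ge> 0\<close> by (auto simp: t_def)
    define c where "c = x + t *\<^sub>R (a - x)"
    have "ball c (t * s) \<subseteq> \<Omega> \<inter> cball x r"
    proof
      fix y assume y: "y \<in> ball c (t * s)"
      define z where "z = x + (1 / t) *\<^sub>R (y - x)"
      have "z - a = (1 / t) *\<^sub>R (y - c)" using t by (simp add: z_def c_def algebra_simps)
      then have "norm (z - a) = norm (y - c) / t" using t by simp
      then have "dist a z = dist c y / t" by (simp add: dist_norm norm_minus_commute)
      then have "dist a z < s" using y t by (simp add: divide_less_eq mult.commute)
      then have "z \<in> \<Omega>" using s by auto
      moreover have "y = (1 - t) *\<^sub>R x + t *\<^sub>R z" using t by (simp add: z_def algebra_simps)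
      ultimately have "y \<in> \<Omega>" using assms(2) x t by (simp add: convex_def)
      have "y - x = t *\<^sub>R (z - x)" using t by (simp add: z_def)
      then have "norm (y - x) = t * norm (z - x)" using t by simp
      then have "dist x y = t * dist x z" by (simp add: dist_norm norm_minus_commute)
      also have "\<dots> \<le> t * (dist x a + dist a z)" using t by (simp add: dist_triangle)
      also have "\<dots> \<le> t * (D + s)"
        using t D[OF x] \<open>dist a z < s\<close> by (intro mult_left_mono) (auto simp: dist_commute)
      also have "\<dots> = r" using s \<open>D \<ge> 0\<close> by (simp add: t_def)
      finally show "y \<in> \<Omega> \<inter> cball x r" using \<open>y \<in> \<Omega>\<close> by simp
    qed
    then have "measure lebesgue (ball c (t * s)) \<le> measure lebesgue (\<Omega> \<inter> cball x r)"
      by (intro measure_mono_fmeasurable) (auto intro: lmeasurable_compact compact_Int_closed assms(1))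
    moreover have "measure lebesgue (ball c (t * s)) = (t * s) ^ DIM('a) * Henstock_Kurzweil_Integration.content (ball (0::'a) 1)"
      using t s content_ball_conv_unit_ball[of "t * s" c] by simp
    moreover have "\<dots> = \<kappa> * r ^ DIM('a)"
      by (simp add: \<kappa>_def t_def power_mult_distrib field_simps)
    ultimately show ?thesis by simp
  qed
  ultimately show ?thesis using that[of \<kappa> "D + s"] s \<open>D \<ge> 0\<close> by auto
qed

lemma half_value_mul_measure_le_integral:
  fixes g :: "'a::euclidean_space \<Rightarrow> real"
  assumes "compact \<Omega>" "\<alpha> > 0" "L > 0"
    and holder: "\<forall>y\<in>\<Omega>. \<forall>z\<in>\<Omega>. \<bar>g y - g z\<bar> \<le> L * dist y z powr \<alpha>"
    and "x \<in> \<Omega>" and small: "L * r powr \<alpha> \<le> \<bar>g x\<bar> / 2"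
  shows "\<bar>g x\<bar> / 2 * measure lebesgue (\<Omega> \<inter> cball x r) \<le> integral \<Omega> (\<lambda>y. \<bar>g y\<bar>)"
proof -
  define K where "K = \<Omega> \<inter> cball x r"
  have "compact K" unfolding K_def using assms(1) by (intro compact_Int_closed) auto
  have cont: "continuous_on \<Omega> (\<lambda>y. \<bar>g y\<bar>)"
    using holder_imp_continuous_on[OF assms(2,3) holder] by (intro continuous_intros)
  then have int_K: "(\<lambda>y. \<bar>g y\<bar>) integrable_on K"
    by (intro continuous_on_compact_imp_integrable_on[OF \<open>compact K\<close>] continuous_on_subset[OF cont])
       (auto simp: K_def)
  have half: "\<bar>g x\<bar> / 2 \<le> \<bar>g y\<bar>" if "y \<in> K" for y
  proof -
    have "\<bar>g x - g y\<bar> \<le> L * dist x y powr \<alpha>" using holder \<open>x \<in> \<Omega>\<close> that by (auto simp: K_def)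
    also have "\<dots> \<le> L * r powr \<alpha>"
      using that assms(2,3) by (intro mult_left_mono powr_mono2) (auto simp: K_def)
    finally show ?thesis using small by linarith
  qed
  have "\<bar>g x\<bar> / 2 * measure lebesgue K = integral K (\<lambda>y. \<bar>g x\<bar> / 2 * 1)"
    by (simp only: integral_mult_right lmeasure_integral[OF lmeasurable_compact[OF \<open>compact K\<close>]])
  also have "\<dots> \<le> integral K (\<lambda>y. \<bar>g y\<bar>)"
    using half
    by (intro integral_le int_K continuous_on_compact_imp_integrable_on[OF \<open>compact K\<close>]) auto
  also have "\<dots> \<le> integral \<Omega> (\<lambda>y. \<bar>g y\<bar>)"
    using int_K continuous_on_compact_imp_integrable_on[OF assms(1) cont]
    by (intro integral_subset_le) (auto simp: K_def)
  finally show ?thesis by (simp add: K_def)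
qed

definition holder_L1_constant :: "real \<Rightarrow> real \<Rightarrow> real \<Rightarrow> real \<Rightarrow> real \<Rightarrow> real" where
  "holder_L1_constant \<alpha> d L \<kappa> \<rho> =
     max (2 / (\<kappa> * \<rho> powr d)) ((2 * (2 * L) powr (d / \<alpha>) / \<kappa>) powr (\<alpha> / (\<alpha> + d)))"

text \<open>The hypothesis is tested at the radius where L r^\<alpha> = \<delta>/2, or at \<rho> if that radius is
  larger; in the second case the bound uses H \<le> H^\<beta>, which needs H \<le> 1.\<close>
lemma le_powr_of_mass_bound:
  fixes \<alpha> d L \<kappa> \<rho> \<delta> H :: real
  assumes "\<alpha> > 0" "d > 0" "L > 0" "\<kappa> > 0" "\<rho> > 0" "\<delta> \<ge> 0" "H \<ge> 0" "H \<le> 1"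
    and mass: "\<And>r. 0 < r \<Longrightarrow> r \<le> \<rho> \<Longrightarrow> L * r powr \<alpha> \<le> \<delta> / 2 \<Longrightarrow> \<delta> / 2 * \<kappa> * r powr d \<le> H"
  shows "\<delta> \<le> holder_L1_constant \<alpha> d L \<kappa> \<rho> * H powr (\<alpha> / (\<alpha> + d))"
proof -
  define \<beta> where "\<beta> = \<alpha> / (\<alpha> + d)"
  define K where "K = 2 * (2 * L) powr (d / \<alpha>) / \<kappa>"
  have \<beta>: "0 < \<beta>" "\<beta> \<le> 1" using assms(1,2) by (auto simp: \<beta>_def)
  have "K > 0" using assms(3,4) by (simp add: K_def)
  have C: "holder_L1_constant \<alpha> d L \<kappa> \<rho> = max (2 / (\<kappa> * \<rho> powr d)) (K powr \<beta>)"
    by (simp add: holder_L1_constant_def K_def \<beta>_def)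
  show ?thesis
  proof (cases "\<delta> = 0")
    case True
    then show ?thesis using assms(4,5) by (simp add: C max.coboundedI1)
  next
    case False
    then have "\<delta> > 0" using assms(6) by simp
    define r\<^sub>1 where "r\<^sub>1 = (\<delta> / (2 * L)) powr (1 / \<alpha>)"
    have "r\<^sub>1 > 0" and r\<^sub>1: "L * r\<^sub>1 powr \<alpha> = \<delta> / 2"
      using \<open>\<delta> > 0\<close> assms(1,3) by (simp_all add: r\<^sub>1_def powr_powr)
    show ?thesis
    proof (cases "r\<^sub>1 \<le> \<rho>")
      case True
      have "r\<^sub>1 powr d = \<delta> powr (d / \<alpha>) / (2 * L) powr (d / \<alpha>)"
        using \<open>\<delta> > 0\<close> assms(3) by (simp add: r\<^sub>1_def powr_powr powr_divide)
      then have "\<delta> * \<delta> powr (d / \<alpha>) = K * (\<delta> / 2 * \<kappa> * r\<^sub>1 powr d)"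
        using assms(3,4) by (simp add: K_def field_simps)
      also have "\<dots> \<le> K * H"
        using mass[OF \<open>r\<^sub>1 > 0\<close> True] r\<^sub>1 assms(4)
        by (intro mult_left_mono) (auto simp: \<open>K > 0\<close> less_imp_le)
      finally have "\<delta> * \<delta> powr (d / \<alpha>) \<le> K * H" .
      moreover have "\<delta> * \<delta> powr (d / \<alpha>) = \<delta> powr (1 / \<beta>)"
        using \<open>\<delta> > 0\<close> assms(1) by (simp add: \<beta>_def powr_add add_divide_distrib)
      ultimately have "\<delta> \<le> (K * H) powr \<beta>"
        using \<beta> \<open>\<delta> > 0\<close> powr_mono2[of \<beta> "\<delta> powr (1 / \<beta>)" "K * H"] by (simp add: powr_powr)
      also have "\<dots> = K powr \<beta> * H powr \<beta>"
        using assms(7) \<open>K > 0\<close> by (simp add: powr_mult)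
      also have "\<dots> \<le> holder_L1_constant \<alpha> d L \<kappa> \<rho> * H powr \<beta>"
        by (simp add: C mult_right_mono)
      finally show ?thesis by (simp add: \<beta>_def)
    next
      case False
      have "L * \<rho> powr \<alpha> \<le> L * r\<^sub>1 powr \<alpha>"
        using False assms(1,3,5) by (intro mult_left_mono powr_mono2) auto
      then have "\<delta> / 2 * \<kappa> * \<rho> powr d \<le> H" using mass[OF assms(5) order_refl] r\<^sub>1 by simp
      also have "H \<le> H powr \<beta>"
        using assms(7,8) \<beta> powr_mono'[of \<beta> 1 H] by (cases "H = 0") auto
      finally have "\<delta> \<le> 2 / (\<kappa> * \<rho> powr d) * H powr \<beta>"
        using assms(4,5) by (simp add: field_simps)
      also have "\<dots> \<le> holder_L1_constant \<alpha> d L \<kappa> \<rho> * H powr \<beta>"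
        unfolding C by (intro mult_right_mono) auto
      finally show ?thesis by (simp add: \<beta>_def)
    qed
  qed
qed

lemma holder_abs_le_L1_powr:
  fixes g :: "'a::euclidean_space \<Rightarrow> real"
  assumes "compact \<Omega>" "\<kappa> > 0" "\<rho> > 0"
    and volume: "\<And>x r. x \<in> \<Omega> \<Longrightarrow> 0 < r \<Longrightarrow> r \<le> \<rho> \<Longrightarrow>
      \<kappa> * r ^ DIM('a) \<le> measure lebesgue (\<Omega> \<inter> cball x r)"
    and "\<alpha> > 0" "L > 0" and holder: "\<forall>y\<in>\<Omega>. \<forall>z\<in>\<Omega>. \<bar>g y - g z\<bar> \<le> L * dist y z powr \<alpha>"
    and L1: "integral \<Omega> (\<lambda>y. \<bar>g y\<bar>) \<le> H" and "H \<le> 1" and "x \<in> \<Omega>"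
  shows "\<bar>g x\<bar> \<le> holder_L1_constant \<alpha> DIM('a) L \<kappa> \<rho> * H powr (\<alpha> / (\<alpha> + DIM('a)))"
proof (rule le_powr_of_mass_bound)
  have "(\<lambda>y. \<bar>g y\<bar>) integrable_on \<Omega>"
    using holder_imp_continuous_on[OF \<open>\<alpha> > 0\<close> \<open>L > 0\<close> holder]
    by (intro continuous_on_compact_imp_integrable_on[OF assms(1)] continuous_intros)
  then show "0 \<le> H" using L1 integral_nonneg[of "\<lambda>y. \<bar>g y\<bar>" \<Omega>] by simp
next
  fix r assume r: "0 < r" "r \<le> \<rho>" and small: "L * r powr \<alpha> \<le> \<bar>g x\<bar> / 2"
  have "\<bar>g x\<bar> / 2 * \<kappa> * r powr DIM('a) = \<bar>g x\<bar> / 2 * (\<kappa> * r ^ DIM('a))"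
    using r by (simp add: powr_realpow)
  also have "\<dots> \<le> \<bar>g x\<bar> / 2 * measure lebesgue (\<Omega> \<inter> cball x r)"
    using volume[OF \<open>x \<in> \<Omega>\<close> r] by (intro mult_left_mono) auto
  also have "\<dots> \<le> integral \<Omega> (\<lambda>y. \<bar>g y\<bar>)"
    by (rule half_value_mul_measure_le_integral[OF assms(1,5,6) holder \<open>x \<in> \<Omega>\<close> small])
  finally show "\<bar>g x\<bar> / 2 * \<kappa> * r powr DIM('a) \<le> H" using L1 by linarith
qed (use assms in auto)

lemma prob_space_eventually_measure_ball_pos:
  fixes M :: "'a::real_normed_vector measure"
  assumes "prob_space M" "sets M = sets borel"
  shows "\<forall>\<^sub>F R in at_top. measure M (ball (0::'a) R) > 0"
proof -
  have "(\<Union>i. ball (0::'a) (real i)) = space M"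
    using sets_eq_imp_space_eq[OF assms(2)] by (auto simp: reals_Archimedean2)
  moreover have "(\<lambda>i. measure M (ball (0::'a) (real i))) \<longlonglongrightarrow> measure M (\<Union>i. ball 0 (real i))"
    using finite_measure.emeasure_finite[OF prob_space.finite_measure[OF assms(1)]]
    by (intro Lim_measure_incseq) (auto simp: assms(2) incseq_def)
  ultimately have "(\<lambda>i. measure M (ball (0::'a) (real i))) \<longlonglongrightarrow> 1"
    using prob_space.prob_space[OF assms(1)] by simp
  then have "\<forall>\<^sub>F i in sequentially. measure M (ball (0::'a) (real i)) > 0"
    by (rule order_tendstoD(1)) simp
  then obtain N where N: "measure M (ball (0::'a) (real N)) > 0"
    by (auto simp: eventually_sequentially)
  have "measure M (ball (0::'a) R) > 0" if "R \<ge> real N" for R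
  proof -
    have "measure M (ball (0::'a) (real N)) \<le> measure M (ball 0 R)"
      using that prob_space.finite_measure[OF assms(1)]
      by (intro finite_measure.finite_measure_mono) (auto simp: assms(2))
    then show ?thesis using N by linarith
  qed
  then show ?thesis by (auto simp: eventually_at_top_linorder)
qed

lemma eventually_holder_difference_le_L1_powr:
  fixes \<Omega> :: "'a::euclidean_space set" and \<nu> :: "'a measure"
    and \<phi> :: "'a \<Rightarrow> real" and \<phi>R :: "real \<Rightarrow> 'a \<Rightarrow> real"
  assumes "compact \<Omega>" "\<kappa> > 0" "\<rho> > 0"
    and volume: "\<And>x r. x \<in> \<Omega> \<Longrightarrow> 0 < r \<Longrightarrow> r \<le> \<rho> \<Longrightarrow>
      \<kappa> * r ^ DIM('a) \<le> measure lebesgue (\<Omega> \<inter> cball x r)"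
    and "\<alpha> > 0" and "prob_space \<nu>" "sets \<nu> = sets borel"
    and holder: "\<forall>x\<in>\<Omega>. \<forall>y\<in>\<Omega>. \<bar>\<phi> x - \<phi> y\<bar> \<le> C\<^sub>H * dist x y powr \<alpha>"
    and holder_R: "\<forall>R>0. measure \<nu> (ball 0 R) > 0 \<longrightarrow>
      (\<forall>x\<in>\<Omega>. \<forall>y\<in>\<Omega>. \<bar>\<phi>R R x - \<phi>R R y\<bar> \<le> C\<^sub>H * dist x y powr \<alpha>)"
    and L1: "\<forall>R>0. measure \<nu> (ball 0 R) > 0 \<longrightarrow> integral \<Omega> (\<lambda>x. \<bar>\<phi>R R x - \<phi> x\<bar>) \<le> h R"
    and "(h \<longlongrightarrow> 0) at_top"
  shows "\<exists>R\<^sub>0>0. \<forall>R\<ge>R\<^sub>0. \<forall>x\<in>\<Omega>. \<bar>\<phi>R R x - \<phi> x\<bar> \<le>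
    holder_L1_constant \<alpha> DIM('a) (2 * max C\<^sub>H 1) \<kappa> \<rho> * h R powr (\<alpha> / (\<alpha> + DIM('a)))"
proof -
  have "\<forall>\<^sub>F R in at_top. measure \<nu> (ball 0 R) > 0 \<and> h R < 1"
    using prob_space_eventually_measure_ball_pos[OF assms(6,7)]
      order_tendstoD(2)[OF \<open>(h \<longlongrightarrow> 0) at_top\<close> zero_less_one]
    by eventually_elim simp
  then obtain R\<^sub>1 where R\<^sub>1: "\<And>R. R \<ge> R\<^sub>1 \<Longrightarrow> measure \<nu> (ball 0 R) > 0 \<and> h R < 1"
    by (auto simp: eventually_at_top_linorder)
  show ?thesis
  proof (intro exI[of _ "max R\<^sub>1 1"] conjI allI impI ballI)
    show "max R\<^sub>1 1 > 0" by simp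
  next
    fix R x assume "max R\<^sub>1 1 \<le> R" "x \<in> \<Omega>"
    then have "R > 0" "measure \<nu> (ball 0 R) > 0" "h R < 1" using R\<^sub>1 by auto
    have "\<bar>(\<phi>R R y - \<phi> y) - (\<phi>R R z - \<phi> z)\<bar> \<le> 2 * max C\<^sub>H 1 * dist y z powr \<alpha>"
      if "y \<in> \<Omega>" "z \<in> \<Omega>" for y z
    proof -
      have "\<bar>(\<phi>R R y - \<phi> y) - (\<phi>R R z - \<phi> z)\<bar> \<le> \<bar>\<phi>R R y - \<phi>R R z\<bar> + \<bar>\<phi> y - \<phi> z\<bar>" by simp
      also have "\<dots> \<le> C\<^sub>H * dist y z powr \<alpha> + C\<^sub>H * dist y z powr \<alpha>"
        using holder holder_R \<open>R > 0\<close> \<open>measure \<nu> (ball 0 R) > 0\<close> that by (intro add_mono) auto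
      also have "\<dots> \<le> 2 * max C\<^sub>H 1 * dist y z powr \<alpha>"
        using mult_right_mono[of C\<^sub>H "max C\<^sub>H 1" "dist y z powr \<alpha>"] by simp
      finally show ?thesis .
    qed
    then show "\<bar>\<phi>R R x - \<phi> x\<bar> \<le>
      holder_L1_constant \<alpha> DIM('a) (2 * max C\<^sub>H 1) \<kappa> \<rho> * h R powr (\<alpha> / (\<alpha> + DIM('a)))"
      using L1 \<open>R > 0\<close> \<open>measure \<nu> (ball 0 R) > 0\<close> \<open>h R < 1\<close> \<open>x \<in> \<Omega>\<close>
      by (intro holder_abs_le_L1_powr[OF assms(1-3) volume \<open>\<alpha> > 0\<close>, where g = "\<lambda>y. \<phi>R R y - \<phi> y"])
         auto
  qed
qed

theorem mainTheorem15:
  fixes \<Omega> :: "(real ^ 'n) set" and m M C\<^sub>H p q :: real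
  assumes "compact \<Omega>" and "convex \<Omega>" and "interior \<Omega> \<noteq> {}"
    and "\<exists>\<epsilon>>0. inner_ball_property \<Omega> \<epsilon>"
    and "0 < m"
    and "p > real CARD('n)" and "p \<ge> 4"
    and "1 / p + 1 / q = 1"
  shows "\<exists>C. \<forall>(\<mu> :: (real ^ 'n) measure) f\<^sub>\<mu> (\<nu> :: (real ^ 'n) measure) f\<^sub>\<nu>
              (h :: real \<Rightarrow> real) (\<phi> :: real ^ 'n \<Rightarrow> real) (\<phi>R :: real \<Rightarrow> real ^ 'n \<Rightarrow> real).
    ( f\<^sub>\<mu> \<in> borel_measurable borel \<and> (\<forall>x. f\<^sub>\<mu> x \<ge> 0) \<and>
      \<mu> = density lborel (\<lambda>x. ennreal (f\<^sub>\<mu> x)) \<and> prob_space \<mu> \<and>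
      measure_support \<mu> = \<Omega> \<and>
      (\<forall>x\<in>\<Omega>. m \<le> f\<^sub>\<mu> x \<and> f\<^sub>\<mu> x \<le> M) \<and>
      f\<^sub>\<nu> \<in> borel_measurable borel \<and> (\<forall>x. f\<^sub>\<nu> x \<ge> 0) \<and>
      \<nu> = density lborel (\<lambda>x. ennreal (f\<^sub>\<nu> x)) \<and> prob_space \<nu> \<and>
      integrable \<nu> (\<lambda>x. (norm x)\<^sup>2) \<and>
      integrable \<nu> (\<lambda>x. norm x powr p) \<and>
      brenier_potential \<Omega> \<mu> \<nu> \<phi> \<and>
      (\<forall>R>0. measure \<nu> (ball 0 R) > 0 \<longrightarrow> brenier_potential \<Omega> \<mu> (trunc_measure \<nu> R) (\<phi>R R)) \<and>
      (\<forall>x\<in>\<Omega>. \<forall>y\<in>\<Omega>. \<bar>\<phi> x - \<phi> y\<bar> \<le> C\<^sub>H * dist x y powr (1 - CARD('n) / p)) \<and>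
      (\<forall>R>0. measure \<nu> (ball 0 R) > 0 \<longrightarrow>
         (\<forall>x\<in>\<Omega>. \<forall>y\<in>\<Omega>. \<bar>\<phi>R R x - \<phi>R R y\<bar> \<le> C\<^sub>H * dist x y powr (1 - CARD('n) / p))) \<and>
      (\<forall>R>0. measure \<nu> (ball 0 R) > 0 \<longrightarrow>
         integral \<Omega> (\<lambda>x. \<bar>\<phi>R R x - \<phi> x\<bar>) \<le> h R) \<and>
      (h \<longlongrightarrow> 0) at_top )
    \<longrightarrow> (\<exists>R\<^sub>0>0. \<forall>R\<ge>R\<^sub>0. \<forall>x\<in>\<Omega>.
          \<bar>\<phi>R R x - \<phi> x\<bar> \<le> C * h R powr ((1 - CARD('n) / p) / (1 + CARD('n) / q)))"
proof -
  obtain \<kappa> \<rho> where "\<kappa> > 0" "\<rho> > 0" and volume: "\<And>x r. x \<in> \<Omega> \<Longrightarrow> 0 < r \<Longrightarrow> r \<le> \<rho> \<Longrightarrow>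
      \<kappa> * r ^ DIM(real ^ 'n) \<le> measure lebesgue (\<Omega> \<inter> cball x r)"
    using convex_body_measure_Int_cball_ge[OF assms(1-3)] by blast
  define \<alpha> where "\<alpha> = 1 - CARD('n) / p"
  have "\<alpha> > 0" using assms(6) by (simp add: \<alpha>_def field_simps)
  have "inverse q = 1 - inverse p" using assms(8) by (simp add: inverse_eq_divide)
  then have "1 + CARD('n) / q = \<alpha> + CARD('n)"
    by (simp add: \<alpha>_def divide_inverse right_diff_distrib)
  then have exponent: "(1 - CARD('n) / p) / (1 + CARD('n) / q) = \<alpha> / (\<alpha> + DIM(real ^ 'n))"
    by (simp add: \<alpha>_def)
  show ?thesis
    unfolding exponent unfolding \<alpha>_def[symmetric]
    by (rule exI[of _ "holder_L1_constant \<alpha> DIM(real ^ 'n) (2 * max C\<^sub>H 1) \<kappa> \<rho>"],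
        intro allI impI, elim conjE)
       (rule eventually_holder_difference_le_L1_powr[OF assms(1) \<open>\<kappa> > 0\<close> \<open>\<rho> > 0\<close> volume \<open>\<alpha> > 0\<close>];
        simp)
qed

end
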